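(* Let $\mathcal{B}$ be a set of $n\times n$ stochastic matrices. Suppose there exists a vector $\pi\in\mathbb{R}^n$ with all components positive such that $\pi^T\mathbf{e}=1$ and $\pi^TA=\pi^T$ for all $A\in\mathcal{B}$. Then there exists a nonzero, symmetric, nonnegative definite matrix $M\in\mathbb{R}^{n\times n}$ of rank $n-1$ such that $M\mathbf{e}=0$ and $x^TA^TMAx\le x^TMx$ for all $x\in\mathbb{R}^n$ and all $A\in\mathcal{B}$.
   Context: $\mathbf{e}\in\mathbb{R}^n$ denotes the vector with all components equal to $1$. A square matrix is stochastic if it is entrywise nonnegative and each of its rows sums to $1$. *)

theory Defs
  imports "HOL-Analysis.Analysis"
begin

definition stochastic :: "real^'n^'n \<Rightarrow> bool" where
  "stochastic A \<longleftrightarrow> (\<forall>i j. A $ i $ j \<ge> 0) \<and> (\<forall>i. (\<Sum>j\<in>UNIV. A $ i $ j) = 1)"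

definition ones :: "real^'n" where
  "ones = (\<chi> i. 1)"

end

theory Submission
  imports Defs
begin

text \<open>The quadratic form of \<open>M = diag \<pi> - \<pi> \<pi>\<^sup>T\<close> is the variance of \<open>x\<close> under the
  probability vector \<open>\<pi>\<close>. Hence \<open>M\<close> is symmetric, positive semidefinite, annihilates
  \<open>e\<close> and, for positive \<open>\<pi>\<close>, has range \<open>e\<^sup>\<bottom>\<close>, so rank \<open>n - 1\<close>. A stochastic \<open>A\<close>
  with \<open>\<pi>\<^sup>T A = \<pi>\<^sup>T\<close> preserves the mean \<open>\<pi>\<^sup>T x\<close>, while by Jensen each entry satisfies
  \<open>(A x)\<^sub>i\<^sup>2 \<le> \<Sum>\<^sub>j A\<^sub>i\<^sub>j x\<^sub>j\<^sup>2\<close>; weighting by \<open>\<pi>\<close> and using stationarity once more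
  gives \<open>\<Sum> \<pi>\<^sub>i (A x)\<^sub>i\<^sup>2 \<le> \<Sum> \<pi>\<^sub>j x\<^sub>j\<^sup>2\<close>, i.e. the variance cannot increase.\<close>

lemma weighted_variance_eq:
  fixes a x :: "'a \<Rightarrow> real"
  assumes "sum a S = 1"
  shows "(\<Sum>j\<in>S. a j * (x j - (\<Sum>k\<in>S. a k * x k))\<^sup>2)
        = (\<Sum>j\<in>S. a j * (x j)\<^sup>2) - (\<Sum>k\<in>S. a k * x k)\<^sup>2"
proof -
  define m where "m = (\<Sum>k\<in>S. a k * x k)"
  have "(\<Sum>j\<in>S. a j * (x j - m)\<^sup>2)
      = (\<Sum>j\<in>S. a j * (x j)\<^sup>2) - 2 * m * (\<Sum>j\<in>S. a j * x j) + m\<^sup>2 * sum a S"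
    by (simp add: power2_eq_square algebra_simps sum.distrib sum_subtractf sum_distrib_left)
  also have "\<dots> = (\<Sum>j\<in>S. a j * (x j)\<^sup>2) - m\<^sup>2"
    using assms by (simp add: m_def power2_eq_square)
  finally show ?thesis unfolding m_def .
qed

lemma square_weighted_mean_le:
  fixes a x :: "'a \<Rightarrow> real"
  assumes "\<And>j. j \<in> S \<Longrightarrow> a j \<ge> 0" and "sum a S = 1"
  shows "(\<Sum>j\<in>S. a j * x j)\<^sup>2 \<le> (\<Sum>j\<in>S. a j * (x j)\<^sup>2)"
proof -
  have "0 \<le> (\<Sum>j\<in>S. a j * (x j - (\<Sum>k\<in>S. a k * x k))\<^sup>2)"
    using assms(1) by (intro sum_nonneg) simp
  then show ?thesis
    unfolding weighted_variance_eq[OF assms(2)] by simp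
qed

lemma inner_ones: "x \<bullet> ones = (\<Sum>i\<in>UNIV. x $ i)"
  by (simp add: inner_vec_def ones_def)

lemma stochastic_mult_vec_square_le:
  assumes "stochastic A"
  shows "((A *v x) $ i)\<^sup>2 \<le> (\<Sum>j\<in>UNIV. A $ i $ j * (x $ j)\<^sup>2)"
  using square_weighted_mean_le[of UNIV "\<lambda>j. A $ i $ j" "\<lambda>j. x $ j"] assms
  by (simp add: stochastic_def matrix_vector_mult_def)

text \<open>\<open>cov_matrix \<pi> = diag \<pi> - \<pi> \<pi>\<^sup>T\<close>, the covariance matrix of the one-hot random vector
  distributed according to \<open>\<pi>\<close>.\<close>
definition cov_matrix :: "real^'n \<Rightarrow> real^'n^'n" where
  "cov_matrix \<pi> = (\<chi> i j. (if i = j then \<pi> $ i else 0) - \<pi> $ i * \<pi> $ j)"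

lemma cov_matrix_mult_vec:
  "cov_matrix \<pi> *v x = (\<chi> i. \<pi> $ i * x $ i - \<pi> $ i * (\<pi> \<bullet> x))"
proof -
  have "(\<Sum>j\<in>UNIV. ((if i = j then \<pi> $ i else 0) - \<pi> $ i * \<pi> $ j) * x $ j)
      = \<pi> $ i * x $ i - \<pi> $ i * (\<Sum>j\<in>UNIV. \<pi> $ j * x $ j)" for i
    by (simp add: left_diff_distrib sum_subtractf sum_distrib_left mult.assoc
        if_distrib[where f="\<lambda>t. t * _"] cong: if_cong)
  then show ?thesis
    by (simp add: cov_matrix_def matrix_vector_mult_def vec_eq_iff inner_vec_def)
qed

lemma transpose_cov_matrix: "transpose (cov_matrix \<pi>) = cov_matrix \<pi>"
  by (simp add: cov_matrix_def transpose_def vec_eq_iff mult.commute)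

lemma cov_matrix_mult_ones:
  assumes "\<pi> \<bullet> ones = 1"
  shows "cov_matrix \<pi> *v ones = 0"
  using assms by (simp add: cov_matrix_mult_vec ones_def vec_eq_iff inner_commute)

lemma cov_matrix_quadratic_form:
  assumes "\<pi> \<bullet> ones = 1"
  shows "x \<bullet> (cov_matrix \<pi> *v x) = (\<Sum>j\<in>UNIV. \<pi> $ j * (x $ j)\<^sup>2) - (\<pi> \<bullet> x)\<^sup>2"
proof -
  have "x \<bullet> (cov_matrix \<pi> *v x)
      = (\<Sum>j\<in>UNIV. \<pi> $ j * (x $ j)\<^sup>2) - (\<Sum>j\<in>UNIV. \<pi> $ j * x $ j) * (\<pi> \<bullet> x)"
    by (simp add: cov_matrix_mult_vec inner_vec_def algebra_simps sum_subtractf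
        sum_distrib_right power2_eq_square)
  then show ?thesis by (simp add: inner_vec_def power2_eq_square)
qed

lemma cov_matrix_nonneg_form:
  assumes "\<And>i. \<pi> $ i \<ge> 0" and "\<pi> \<bullet> ones = 1"
  shows "x \<bullet> (cov_matrix \<pi> *v x) \<ge> 0"
proof -
  have "(\<pi> \<bullet> x)\<^sup>2 \<le> (\<Sum>j\<in>UNIV. \<pi> $ j * (x $ j)\<^sup>2)"
    using square_weighted_mean_le[of UNIV "\<lambda>j. \<pi> $ j" "\<lambda>j. x $ j"] assms
    by (simp add: inner_ones inner_vec_def[of \<pi> x])
  then show ?thesis
    by (simp add: cov_matrix_quadratic_form[OF assms(2)])
qed

lemma range_cov_matrix:
  fixes \<pi> :: "real^'n"
  assumes pos: "\<And>i. \<pi> $ i > 0" and norm: "\<pi> \<bullet> ones = 1"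
  shows "range (\<lambda>x. cov_matrix \<pi> *v x) = {y. ones \<bullet> y = 0}"
proof (intro equalityI subsetI)
  fix y assume "y \<in> range (\<lambda>x. cov_matrix \<pi> *v x)"
  then obtain x where y: "y = cov_matrix \<pi> *v x" by auto
  have "ones \<bullet> y = (\<Sum>i\<in>UNIV. \<pi> $ i * x $ i) - (\<pi> \<bullet> ones) * (\<pi> \<bullet> x)"
    by (simp add: y cov_matrix_mult_vec inner_commute[of ones] inner_ones
        sum_subtractf sum_distrib_right)
  then show "y \<in> {y. ones \<bullet> y = 0}"
    using norm by (simp add: inner_vec_def)
next
  fix y :: "real^'n" assume "y \<in> {y. ones \<bullet> y = 0}"
  then have y0: "(\<Sum>i\<in>UNIV. y $ i) = 0"
    by (simp add: inner_commute[of ones] inner_ones)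
  define x :: "real^'n" where "x = (\<chi> i. y $ i / \<pi> $ i)"
  have "\<pi> \<bullet> x = (\<Sum>i\<in>UNIV. y $ i)"
    unfolding inner_vec_def x_def using pos by (intro sum.cong) (auto simp: less_imp_neq[symmetric])
  then have "cov_matrix \<pi> *v x = y"
    using pos y0 by (simp add: cov_matrix_mult_vec vec_eq_iff x_def less_imp_neq[symmetric])
  then show "y \<in> range (\<lambda>x. cov_matrix \<pi> *v x)" by (metis rangeI)
qed

lemma rank_cov_matrix:
  fixes \<pi> :: "real^'n"
  assumes "\<And>i. \<pi> $ i > 0" and "\<pi> \<bullet> ones = 1"
  shows "rank (cov_matrix \<pi>) = CARD('n) - 1"
proof -
  have "ones \<noteq> (0::real^'n)" by (simp add: ones_def vec_eq_iff)
  then show ?thesis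
    unfolding rank_dim_range range_cov_matrix[OF assms] using dim_hyperplane[of ones] by simp
qed

lemma cov_matrix_contraction:
  assumes "stochastic A" and "\<pi> v* A = \<pi>"
    and pos: "\<And>i. \<pi> $ i \<ge> 0" and norm: "\<pi> \<bullet> ones = 1"
  shows "(A *v x) \<bullet> (cov_matrix \<pi> *v (A *v x)) \<le> x \<bullet> (cov_matrix \<pi> *v x)"
proof -
  have mean: "\<pi> \<bullet> (A *v x) = \<pi> \<bullet> x"
    by (metis assms(2) dot_lmul_matrix)
  have stationary: "(\<Sum>i\<in>UNIV. \<pi> $ i * A $ i $ j) = \<pi> $ j" for j
    using assms(2) by (simp add: vector_matrix_mult_def vec_eq_iff mult.commute)
  have "(\<Sum>i\<in>UNIV. \<pi> $ i * ((A *v x) $ i)\<^sup>2)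
      \<le> (\<Sum>i\<in>UNIV. \<pi> $ i * (\<Sum>j\<in>UNIV. A $ i $ j * (x $ j)\<^sup>2))"
    using pos stochastic_mult_vec_square_le[OF assms(1)] by (intro sum_mono mult_left_mono) auto
  also have "\<dots> = (\<Sum>j\<in>UNIV. (\<Sum>i\<in>UNIV. \<pi> $ i * A $ i $ j) * (x $ j)\<^sup>2)"
    by (simp add: sum_distrib_left sum_distrib_right mult.assoc) (rule sum.swap)
  also have "\<dots> = (\<Sum>j\<in>UNIV. \<pi> $ j * (x $ j)\<^sup>2)"
    by (simp add: stationary)
  finally show ?thesis
    unfolding cov_matrix_quadratic_form[OF norm] mean by simp
qed

theorem mainTheorem4:
  fixes \<B> :: "(real^'n^'n) set" and \<pi> :: "real^'n"
  assumes n2: "CARD('n) \<ge> 2"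
    and stoch: "\<forall>A\<in>\<B>. stochastic A"
    and pos: "\<forall>i. \<pi> $ i > 0"
    and norm: "\<pi> \<bullet> ones = 1"
    and inv: "\<forall>A\<in>\<B>. \<pi> v* A = \<pi>"
  shows "\<exists>M :: real^'n^'n. M \<noteq> 0 \<and> transpose M = M
           \<and> (\<forall>x. x \<bullet> (M *v x) \<ge> 0)
           \<and> rank M = CARD('n) - 1
           \<and> M *v ones = 0
           \<and> (\<forall>x. \<forall>A\<in>\<B>. (A *v x) \<bullet> (M *v (A *v x)) \<le> x \<bullet> (M *v x))"
proof (intro exI conjI allI ballI)
  have nonneg: "\<pi> $ i \<ge> 0" for i
    using pos less_imp_le by blast
  have rank: "rank (cov_matrix \<pi>) = CARD('n) - 1"
    using rank_cov_matrix pos norm by blast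
  then show "rank (cov_matrix \<pi>) = CARD('n) - 1" .
  show "cov_matrix \<pi> \<noteq> 0"
  proof
    assume "cov_matrix \<pi> = 0"
    with rank n2 show False by simp
  qed
  show "transpose (cov_matrix \<pi>) = cov_matrix \<pi>"
    by (rule transpose_cov_matrix)
  show "x \<bullet> (cov_matrix \<pi> *v x) \<ge> 0" for x
    using cov_matrix_nonneg_form nonneg norm by blast
  show "cov_matrix \<pi> *v ones = 0"
    using cov_matrix_mult_ones norm by blast
  show "(A *v x) \<bullet> (cov_matrix \<pi> *v (A *v x)) \<le> x \<bullet> (cov_matrix \<pi> *v x)"
    if "A \<in> \<B>" for A x
    using cov_matrix_contraction stoch inv nonneg norm that by blast
qed

end
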